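(* Let $v=v(z)=zM(z)$, where $M(z)=\frac{1-z-\sqrt{1-2z-3z^2}}{2z^2}$ (so $z=\frac{v}{1+v+v^2}$). The total number of leaves over all Retakh plane trees, counted by number of nodes, has generating function $$\sum_{\tau}\mathrm{leaves}(\tau)\,z^{|\tau|}=\frac{v(1+v)(1-v+2v^2-v^3)}{(1-v)(1+v+v^2)},$$ where the sum runs over all Retakh plane trees $\tau$, $|\tau|$ is the number of nodes, and $\mathrm{leaves}(\tau)$ is the number of nodes with no children (the one-node tree has one leaf).
   Context: A Retakh plane tree is a plane (ordered rooted) tree in which every non-root leaf has depth $1$ or even depth (root depth $0$); the one-node tree is included. These correspond to Dyck paths all of whose peaks are at level $1$ or at an even level, non-root leaves corresponding to peaks. *)

theory Defs
  imports Complex_Main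
begin

datatype ptree = Node "ptree list"

fun nodes :: "ptree \<Rightarrow> nat" where
  "nodes (Node ts) = 1 + sum_list (map nodes ts)"

fun leaves :: "ptree \<Rightarrow> nat" where
  "leaves (Node []) = 1"
| "leaves (Node (t # ts)) = sum_list (map leaves (t # ts))"

fun leaf_depths :: "nat \<Rightarrow> ptree \<Rightarrow> nat set" where
  "leaf_depths d (Node []) = {d}"
| "leaf_depths d (Node (t # ts)) = (\<Union>s\<in>set (t # ts). leaf_depths (Suc d) s)"

definition retakh :: "ptree \<Rightarrow> bool" where
  "retakh \<tau> \<longleftrightarrow> (\<forall>d\<in>leaf_depths 0 \<tau>. d \<noteq> 0 \<longrightarrow> d = 1 \<or> even d)"

definition retakh_leaf_total :: "nat \<Rightarrow> nat" where
  "retakh_leaf_total n = (\<Sum>\<tau>\<in>{\<tau>. retakh \<tau> \<and> nodes \<tau> = n}. leaves \<tau>)"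

definition motzkinM :: "real \<Rightarrow> real" where
  "motzkinM z = (1 - z - sqrt (1 - 2*z - 3*z^2)) / (2 * z^2)"

definition vfun :: "real \<Rightarrow> real" where
  "vfun z = z * motzkinM z"

end

theory Submission
  imports Defs
begin

text \<open>
  Passing from a node to its children lowers all leaf depths by one. Hence a Retakh tree is a
  root over a sequence of branches (trees whose leaves lie at depth 0 or at odd depth), a branch
  is a root over a sequence of even-leaved trees, and even- resp. odd-leaved trees are roots over
  sequences (nonempty ones for odd) of trees of the other parity. For generating functions this
  gives \<open>F = 1 + T F\<close> for sequences and \<open>L\<^sub>F = L\<^sub>T F\<^sup>2\<close> for their leaf-marked
  versions, a system which is solved explicitly in terms of \<open>v\<close>; the even-leaved forests
  turn out to have generating function \<open>1 + v\<close>. Convergence for \<open>|z| < 1/3\<close> follows by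
  bounding the partial sums, inductively in their length, by the values of this solution at
  \<open>|z|\<close>.
\<close>

definition forest_nodes :: "ptree list \<Rightarrow> nat" where
  "forest_nodes ts = sum_list (map nodes ts)"

definition forest_leaves :: "ptree list \<Rightarrow> nat" where
  "forest_leaves ts = sum_list (map leaves ts)"

lemma forest_nodes_simps [simp]:
  "forest_nodes [] = 0" "forest_nodes (t # ts) = nodes t + forest_nodes ts"
  by (simp_all add: forest_nodes_def)

lemma forest_leaves_simps [simp]:
  "forest_leaves [] = 0" "forest_leaves (t # ts) = leaves t + forest_leaves ts"
  by (simp_all add: forest_leaves_def)

lemma nodes_Node: "nodes (Node ts) = Suc (forest_nodes ts)"
  by (simp add: forest_nodes_def)

lemma leaves_Node: "leaves (Node ts) = forest_leaves ts + of_bool (ts = [])"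
  by (cases ts) (simp_all add: forest_leaves_def)

declare nodes.simps [simp del]

lemma nodes_pos: "0 < nodes t"
  by (cases t) (simp add: nodes_Node)

lemma nodes_neq_0 [simp]: "nodes t \<noteq> 0"
  using nodes_pos[of t] by simp

lemma length_le_forest_nodes: "length ts \<le> forest_nodes ts"
proof (induction ts)
  case (Cons t ts)
  then show ?case using nodes_pos[of t] by simp
qed simp

lemma nodes_le_forest_nodes: "t \<in> set ts \<Longrightarrow> nodes t \<le> forest_nodes ts"
  by (induction ts) auto

lemma leaves_le_nodes: "leaves t \<le> nodes t"
proof (induction t)
  case (Node ts)
  have "forest_leaves ts \<le> forest_nodes ts"
    unfolding forest_leaves_def forest_nodes_def using Node by (rule sum_list_mono)
  then show ?case by (simp add: leaves_Node nodes_Node)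
qed

lemma forest_leaves_le_nodes: "forest_leaves ts \<le> forest_nodes ts"
  unfolding forest_leaves_def forest_nodes_def by (rule sum_list_mono) (rule leaves_le_nodes)

lemma finite_nodes_le: "finite {t. nodes t \<le> n}"
proof (induction n)
  case 0
  then show ?case by simp
next
  case (Suc n)
  have "{t. nodes t \<le> Suc n} \<subseteq> Node ` {ts. set ts \<subseteq> {t. nodes t \<le> n} \<and> length ts \<le> n}"
  proof
    fix t assume "t \<in> {t. nodes t \<le> Suc n}"
    moreover obtain ts where "t = Node ts" by (cases t)
    ultimately show "t \<in> Node ` {ts. set ts \<subseteq> {t. nodes t \<le> n} \<and> length ts \<le> n}"
      using nodes_le_forest_nodes[of _ ts] length_le_forest_nodes[of ts]
      by (force simp: nodes_Node)
  qed
  then show ?case by (rule finite_surj[OF finite_lists_length_le[OF Suc.IH]])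
qed

lemma finite_forest_nodes_eq: "finite {ts. forest_nodes ts = n}"
proof (rule finite_subset)
  show "{ts. forest_nodes ts = n} \<subseteq> {ts. set ts \<subseteq> {t. nodes t \<le> n} \<and> length ts \<le> n}"
    using nodes_le_forest_nodes length_le_forest_nodes by fastforce
qed (rule finite_lists_length_le[OF finite_nodes_le])

lemma leaf_depths_Suc: "leaf_depths (Suc d) t = Suc ` leaf_depths d t"
  by (induction d t rule: leaf_depths.induct) auto

lemma leaf_depths_Node:
  "ts \<noteq> [] \<Longrightarrow> leaf_depths d (Node ts) = (\<Union>t\<in>set ts. Suc ` leaf_depths d t)"
  by (cases ts) (simp_all add: leaf_depths_Suc)

definition even_leaved :: "ptree \<Rightarrow> bool" where
  "even_leaved t \<longleftrightarrow> (\<forall>d\<in>leaf_depths 0 t. even d)"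

definition odd_leaved :: "ptree \<Rightarrow> bool" where
  "odd_leaved t \<longleftrightarrow> (\<forall>d\<in>leaf_depths 0 t. odd d)"

definition retakh_branch :: "ptree \<Rightarrow> bool" where
  "retakh_branch t \<longleftrightarrow> (\<forall>d\<in>leaf_depths 0 t. d = 0 \<or> odd d)"

lemma even_leaved_Node: "even_leaved (Node ts) \<longleftrightarrow> list_all odd_leaved ts"
  by (cases "ts = []") (auto simp: even_leaved_def odd_leaved_def leaf_depths_Node list_all_iff)

lemma odd_leaved_Node: "odd_leaved (Node ts) \<longleftrightarrow> ts \<noteq> [] \<and> list_all even_leaved ts"
  by (cases "ts = []") (auto simp: even_leaved_def odd_leaved_def leaf_depths_Node list_all_iff)

lemma retakh_branch_Node: "retakh_branch (Node ts) \<longleftrightarrow> list_all even_leaved ts"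
  by (cases "ts = []") (auto simp: even_leaved_def retakh_branch_def leaf_depths_Node list_all_iff)

lemma retakh_Node: "retakh (Node ts) \<longleftrightarrow> list_all retakh_branch ts"
  by (cases "ts = []") (auto simp: retakh_def retakh_branch_def leaf_depths_Node list_all_iff)

section \<open>Truncated and full generating functions\<close>

definition seq_conv :: "(nat \<Rightarrow> real) \<Rightarrow> (nat \<Rightarrow> real) \<Rightarrow> nat \<Rightarrow> real" where
  "seq_conv a b n = (\<Sum>k\<le>n. a k * b (n - k))"

definition partial_gf :: "(nat \<Rightarrow> real) \<Rightarrow> real \<Rightarrow> nat \<Rightarrow> real" where
  "partial_gf a t N = (\<Sum>n<N. a n * t ^ n)"

definition gf :: "(nat \<Rightarrow> real) \<Rightarrow> real \<Rightarrow> real" where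
  "gf a z = (\<Sum>n. a n * z ^ n)"

lemma partial_gf_nonneg: "(\<And>n. 0 \<le> a n) \<Longrightarrow> 0 \<le> t \<Longrightarrow> 0 \<le> partial_gf a t N"
  unfolding partial_gf_def by (intro sum_nonneg mult_nonneg_nonneg) auto

lemma partial_gf_of_bool_0: "partial_gf (\<lambda>n. of_bool (n = 0)) t N = of_bool (0 < N)"
  by (induction N) (auto simp: partial_gf_def)

lemma partial_gf_diff:
  "partial_gf (\<lambda>n. a n - b n) t N = partial_gf a t N - partial_gf b t N"
  unfolding partial_gf_def by (simp add: left_diff_distrib sum_subtractf)

lemma partial_gf_Suc_shift:
  "a 0 = 0 \<Longrightarrow> partial_gf a t (Suc N) = t * partial_gf (\<lambda>n. a (Suc n)) t N"
  unfolding partial_gf_def by (subst sum.lessThan_Suc_shift) (simp add: sum_distrib_left ac_simps)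

lemma partial_gf_conv_le:
  assumes a0: "a 0 = 0" and "\<And>n. 0 \<le> a n" "\<And>n. 0 \<le> b n" "0 \<le> t"
  shows "partial_gf (seq_conv a b) t (Suc N) \<le> partial_gf a t (Suc N) * partial_gf b t N"
proof -
  define F where "F = (\<lambda>(i, j). a i * t ^ i * (b j * t ^ j))"
  define T where "T = {(i, j). i + j < Suc N}"
  define S where "S = {..<Suc N} \<times> {..<N}"
  have fin: "finite T" "finite S"
    unfolding T_def S_def by (rule finite_subset[of _ "{..<Suc N} \<times> {..<Suc N}"]) auto
  \<comment> \<open>Only pairs with \<open>i = 0\<close> leave the rectangle \<open>S\<close>, and these contribute nothing.\<close>
  have F0: "F p = 0" if "p \<in> T - S" for p
  proof -
    have "fst p = 0" using that by (auto simp: T_def S_def)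
    then show ?thesis using a0 by (auto simp: F_def split: prod.splits)
  qed
  have "partial_gf (seq_conv a b) t (Suc N)
      = (\<Sum>k<Suc N. \<Sum>i\<le>k. a i * t ^ i * (b (k - i) * t ^ (k - i)))"
    unfolding partial_gf_def seq_conv_def sum_distrib_right
    by (intro sum.cong refl) (simp add: power_add[symmetric] ac_simps)
  also have "\<dots> = sum F T"
    unfolding F_def T_def by (simp add: sum.triangle_reindex)
  also have "\<dots> \<le> sum F (T \<union> S)"
    using fin assms by (intro sum_mono2) (auto simp: F_def split: prod.splits)
  also have "\<dots> = sum F S"
    using fin F0 by (intro sum.mono_neutral_right) auto
  also have "\<dots> = partial_gf a t (Suc N) * partial_gf b t N"
    unfolding S_def F_def partial_gf_def by (simp only: sum_product sum.cartesian_product)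
  finally show ?thesis .
qed

lemma partial_gf_fixpoint_le:
  assumes f: "\<And>n. f n = of_bool (n = 0) + seq_conv a f n"
    and nonneg: "a 0 = 0" "\<And>n. 0 \<le> a n" "\<And>n. 0 \<le> f n" "0 \<le> t"
    and A: "partial_gf a t (Suc N) \<le> A" and B: "partial_gf f t N \<le> B" and AB: "1 + A * B \<le> B"
  shows "partial_gf f t (Suc N) \<le> B"
proof -
  have "f n * t ^ n = of_bool (n = 0) * t ^ n + seq_conv a f n * t ^ n" for n
    using f[of n] by (simp add: distrib_right)
  then have "partial_gf f t (Suc N) = 1 + partial_gf (seq_conv a f) t (Suc N)"
    by (simp add: partial_gf_def sum.distrib)
  also have "\<dots> \<le> 1 + partial_gf a t (Suc N) * partial_gf f t N"
    using partial_gf_conv_le[of a f t N] nonneg by simp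
  also have "\<dots> \<le> 1 + A * B"
    using A B nonneg partial_gf_nonneg[of f t N] partial_gf_nonneg[of a t "Suc N"]
    by (intro add_left_mono mult_mono) auto
  finally show ?thesis using AB by linarith
qed

lemma partial_gf_bounded:
  assumes "\<And>n. 0 \<le> a n" "0 \<le> t" "\<And>N. partial_gf a t N \<le> B"
  shows summable_partial_gf_bounded: "summable (\<lambda>n. a n * t ^ n)"
    and gf_le_partial_gf_bound: "gf a t \<le> B"
proof -
  show s: "summable (\<lambda>n. a n * t ^ n)"
    using assms by (intro summableI_nonneg_bounded[where x = B]) (auto simp: partial_gf_def)
  show "gf a t \<le> B"
    unfolding gf_def using assms by (intro suminf_le_const[OF s]) (auto simp: partial_gf_def)
qed

lemma summable_gf_times_n:
  assumes a: "\<And>n. 0 \<le> a n" and b: "\<And>n. 0 \<le> b n" "\<And>n. b n \<le> real n * a n"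
    and s: "summable (\<lambda>n. a n * s ^ n)" and t: "0 \<le> t" "t < s"
  shows "summable (\<lambda>n. b n * t ^ n)"
proof -
  define q where "q = t / s"
  have q: "0 \<le> q" "q < 1" using t by (auto simp: q_def)
  have "(\<lambda>n. real n * q ^ n) \<longlonglongrightarrow> 0"
    using powser_times_n_limit_0[of q] q by simp
  then have "Bseq (\<lambda>n. real n * q ^ n)"
    by (rule convergent_imp_Bseq[OF convergentI])
  then obtain K where K: "\<And>n. norm (real n * q ^ n) \<le> K"
    unfolding Bseq_def by blast
  have bound: "norm (b n * t ^ n) \<le> K * (a n * s ^ n)" for n
  proof -
    have "norm (b n * t ^ n) = b n * t ^ n" using b t by simp
    also have "\<dots> \<le> real n * a n * t ^ n" using b t by (intro mult_right_mono) auto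
    also have "\<dots> = (real n * q ^ n) * (a n * s ^ n)"
      using t by (simp add: q_def power_divide)
    also have "\<dots> \<le> K * (a n * s ^ n)"
      using K[of n] q a t by (intro mult_right_mono) auto
    finally show ?thesis .
  qed
  show ?thesis
  proof (rule summable_comparison_test)
    show "\<exists>N. \<forall>n\<ge>N. norm (b n * t ^ n) \<le> K * (a n * s ^ n)" using bound by blast
    show "summable (\<lambda>n. K * (a n * s ^ n))" using s by (rule summable_mult)
  qed
qed

lemma gf_sums:
  assumes "\<And>n. 0 \<le> a n" "summable (\<lambda>n. a n * \<bar>z\<bar> ^ n)"
  shows "(\<lambda>n. a n * z ^ n) sums gf a z"
  unfolding gf_def using assms
  by (intro summable_sums summable_norm_cancel[of "\<lambda>n. a n * z ^ n"]) (simp add: abs_mult power_abs)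

lemma abs_gf_le:
  assumes "\<And>n. 0 \<le> a n" "summable (\<lambda>n. a n * \<bar>z\<bar> ^ n)"
  shows "\<bar>gf a z\<bar> \<le> gf a \<bar>z\<bar>"
  unfolding gf_def using summable_norm[of "\<lambda>n. a n * z ^ n"] assms
  by (simp add: abs_mult power_abs)

lemma sums_seq_conv:
  assumes "\<And>n. 0 \<le> a n" "\<And>n. 0 \<le> b n"
    and "summable (\<lambda>n. a n * \<bar>z\<bar> ^ n)" "summable (\<lambda>n. b n * \<bar>z\<bar> ^ n)"
  shows "(\<lambda>n. seq_conv a b n * z ^ n) sums (gf a z * gf b z)"
proof -
  have "(\<lambda>n. \<Sum>i\<le>n. a i * z ^ i * (b (n - i) * z ^ (n - i))) sums (gf a z * gf b z)"
    unfolding gf_def using assms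
    by (intro Cauchy_product_sums) (simp_all add: abs_mult power_abs)
  moreover have "(\<Sum>i\<le>n. a i * z ^ i * (b (n - i) * z ^ (n - i))) = seq_conv a b n * z ^ n" for n
    unfolding seq_conv_def sum_distrib_right
    by (intro sum.cong refl) (simp add: power_add[symmetric] ac_simps)
  ultimately show ?thesis by simp
qed

lemma sums_of_bool_0: "(\<lambda>n. of_bool (n = 0) * z ^ n) sums (1::real)"
proof -
  have "(\<lambda>n. of_bool (n = 0) * z ^ n) = (\<lambda>n. if n = 0 then 1 else 0)" by auto
  then show ?thesis using sums_single[of 0 "\<lambda>_. 1::real"] by simp
qed

lemma sums_Suc_shift:
  fixes z :: real
  assumes "a 0 = 0" "(\<lambda>n. a (Suc n) * z ^ n) sums B"
  shows "(\<lambda>n. a n * z ^ n) sums (z * B)"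
proof -
  have "(\<lambda>n. a (Suc n) * z ^ Suc n) sums (z * B)"
    using sums_mult[OF assms(2), of z] by (simp add: ac_simps)
  then have "(\<lambda>n. a n * z ^ n) sums (z * B + a 0 * z ^ 0)"
    using sums_Suc_iff[of "\<lambda>n. a n * z ^ n"] by simp
  then show ?thesis using assms(1) by simp
qed

lemma gf_Suc_shift: "a 0 = 0 \<Longrightarrow> (\<lambda>n. a (Suc n) * z ^ n) sums B \<Longrightarrow> gf a z = z * B"
  unfolding gf_def by (rule sums_unique[symmetric], rule sums_Suc_shift)

section \<open>Counting trees and forests of a given class\<close>

definition trees_of :: "(ptree \<Rightarrow> bool) \<Rightarrow> nat \<Rightarrow> ptree set" where
  "trees_of P n = {t. P t \<and> nodes t = n}"

definition forests_of :: "(ptree \<Rightarrow> bool) \<Rightarrow> nat \<Rightarrow> ptree list set" where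
  "forests_of P n = {ts. list_all P ts \<and> forest_nodes ts = n}"

definition tree_count :: "(ptree \<Rightarrow> bool) \<Rightarrow> nat \<Rightarrow> real" where
  "tree_count P n = real (card (trees_of P n))"

definition tree_leaf_total :: "(ptree \<Rightarrow> bool) \<Rightarrow> nat \<Rightarrow> real" where
  "tree_leaf_total P n = (\<Sum>t\<in>trees_of P n. real (leaves t))"

definition forest_count :: "(ptree \<Rightarrow> bool) \<Rightarrow> nat \<Rightarrow> real" where
  "forest_count P n = real (card (forests_of P n))"

definition forest_leaf_total :: "(ptree \<Rightarrow> bool) \<Rightarrow> nat \<Rightarrow> real" where
  "forest_leaf_total P n = (\<Sum>ts\<in>forests_of P n. real (forest_leaves ts))"

lemma finite_trees_of [simp]: "finite (trees_of P n)"
  unfolding trees_of_def by (rule finite_subset[OF _ finite_nodes_le[of n]]) auto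

lemma finite_forests_of [simp]: "finite (forests_of P n)"
  unfolding forests_of_def by (rule finite_subset[OF _ finite_forest_nodes_eq[of n]]) auto

lemma count_nonneg [simp]:
  "0 \<le> tree_count P n" "0 \<le> tree_leaf_total P n"
  "0 \<le> forest_count P n" "0 \<le> forest_leaf_total P n"
  by (simp_all add: tree_count_def tree_leaf_total_def forest_count_def forest_leaf_total_def
      sum_nonneg)

lemma trees_of_0: "trees_of P 0 = {}"
  by (simp add: trees_of_def)

lemma tree_count_0 [simp]: "tree_count P 0 = 0" and tree_leaf_total_0 [simp]: "tree_leaf_total P 0 = 0"
  by (simp_all add: tree_count_def tree_leaf_total_def trees_of_0)

lemma tree_leaf_total_le: "tree_leaf_total P n \<le> real n * tree_count P n"
proof -
  have "tree_leaf_total P n \<le> (\<Sum>t\<in>trees_of P n. real n)"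
    unfolding tree_leaf_total_def
    by (rule sum_mono) (use leaves_le_nodes in \<open>auto simp: trees_of_def\<close>)
  then show ?thesis by (simp add: tree_count_def mult.commute)
qed

lemma forest_leaf_total_le: "forest_leaf_total P n \<le> real n * forest_count P n"
proof -
  have "forest_leaf_total P n \<le> (\<Sum>ts\<in>forests_of P n. real n)"
    unfolding forest_leaf_total_def
    by (rule sum_mono) (use forest_leaves_le_nodes in \<open>auto simp: forests_of_def\<close>)
  then show ?thesis by (simp add: forest_count_def mult.commute)
qed

lemma sum_trees_of_Suc:
  "(\<Sum>t\<in>trees_of P (Suc n). f t) = (\<Sum>ts | P (Node ts) \<and> forest_nodes ts = n. f (Node ts))"
proof -
  have "trees_of P (Suc n) = Node ` {ts. P (Node ts) \<and> forest_nodes ts = n}"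
  proof (intro equalityI subsetI)
    fix t assume "t \<in> trees_of P (Suc n)"
    then show "t \<in> Node ` {ts. P (Node ts) \<and> forest_nodes ts = n}"
      by (cases t) (auto simp: trees_of_def nodes_Node)
  qed (auto simp: trees_of_def nodes_Node)
  then show ?thesis by (simp add: sum.reindex inj_on_def)
qed

lemma sum_forests_of:
  fixes f :: "ptree list \<Rightarrow> real"
  shows "(\<Sum>ts\<in>forests_of P n. f ts) = of_bool (n = 0) * f []
           + (\<Sum>k\<le>n. \<Sum>t\<in>trees_of P k. \<Sum>ts\<in>forests_of P (n - k). f (t # ts))"
proof -
  define A where "A = (\<Union>k\<le>n. trees_of P k \<times> forests_of P (n - k))"
  have split: "forests_of P n = {ts \<in> {[]}. n = 0} \<union> (\<lambda>(t, ts). t # ts) ` A"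
  proof (intro equalityI subsetI)
    fix ts assume ts: "ts \<in> forests_of P n"
    show "ts \<in> {ts \<in> {[]}. n = 0} \<union> (\<lambda>(t, ts). t # ts) ` A"
    proof (cases ts)
      case (Cons t ts')
      then have "(t, ts') \<in> A"
        using ts unfolding A_def by (auto simp: forests_of_def trees_of_def)
      then show ?thesis using Cons by force
    qed (use ts in \<open>auto simp: forests_of_def\<close>)
  qed (auto simp: A_def forests_of_def trees_of_def)
  have "(\<Sum>ts\<in>(\<lambda>(t, ts). t # ts) ` A. f ts) = (\<Sum>(t, ts)\<in>A. f (t # ts))"
    by (subst sum.reindex) (auto simp: inj_on_def case_prod_beta)
  also have "\<dots> = (\<Sum>k\<le>n. \<Sum>(t, ts)\<in>trees_of P k \<times> forests_of P (n - k). f (t # ts))"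
    unfolding A_def by (rule sum.UNION_disjoint) (simp_all, auto simp: trees_of_def)
  also have "\<dots> = (\<Sum>k\<le>n. \<Sum>t\<in>trees_of P k. \<Sum>ts\<in>forests_of P (n - k). f (t # ts))"
    by (simp add: sum.cartesian_product)
  finally show ?thesis
    unfolding split by (subst sum.union_disjoint) (auto simp: A_def)
qed

lemma forest_count_rec:
  "forest_count P n = of_bool (n = 0) + seq_conv (tree_count P) (forest_count P) n"
proof -
  have "forest_count P n = (\<Sum>ts\<in>forests_of P n. 1)"
    by (simp add: forest_count_def)
  also have "\<dots> = of_bool (n = 0) * 1 + (\<Sum>k\<le>n. \<Sum>t\<in>trees_of P k. \<Sum>ts\<in>forests_of P (n - k). 1)"
    by (rule sum_forests_of)
  finally show ?thesis
    by (simp add: seq_conv_def tree_count_def forest_count_def)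
qed

lemma forest_leaf_total_rec:
  "forest_leaf_total P n = seq_conv (tree_leaf_total P) (forest_count P) n
                         + seq_conv (tree_count P) (forest_leaf_total P) n"
proof -
  have "forest_leaf_total P n
      = (\<Sum>k\<le>n. \<Sum>t\<in>trees_of P k. \<Sum>ts\<in>forests_of P (n - k). real (leaves t) + real (forest_leaves ts))"
    unfolding forest_leaf_total_def by (subst sum_forests_of) simp
  also have "\<dots> = (\<Sum>k\<le>n. tree_leaf_total P k * forest_count P (n - k)
                          + tree_count P k * forest_leaf_total P (n - k))"
    by (intro sum.cong refl)
      (simp add: sum.distrib tree_leaf_total_def forest_leaf_total_def tree_count_def
        forest_count_def sum_distrib_left sum_distrib_right mult.commute)
  finally show ?thesis by (simp add: seq_conv_def sum.distrib)
qed

lemma Nil_in_forests_of [simp]: "[] \<in> forests_of P n \<longleftrightarrow> n = 0"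
  by (auto simp: forests_of_def)

lemma sum_forests_of_Nil_indicator:
  "(\<Sum>ts\<in>forests_of P n. of_bool (ts = [])) = (of_bool (n = 0) :: real)"
  by (simp add: of_bool_def sum.delta)

lemma tree_counts_Suc_eq_forests:
  assumes "\<And>ts. P (Node ts) \<longleftrightarrow> list_all Q ts"
  shows "tree_count P (Suc n) = forest_count Q n"
    and "tree_leaf_total P (Suc n) = forest_leaf_total Q n + of_bool (n = 0)"
proof -
  have eq: "{ts. P (Node ts) \<and> forest_nodes ts = n} = forests_of Q n"
    using assms by (auto simp: forests_of_def)
  show "tree_count P (Suc n) = forest_count Q n"
    using sum_trees_of_Suc[where f = "\<lambda>_. 1::nat" and P = P and n = n]
    by (simp add: tree_count_def forest_count_def eq)
  have "tree_leaf_total P (Suc n) = (\<Sum>ts\<in>forests_of Q n. real (forest_leaves ts) + of_bool (ts = []))"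
    by (simp add: tree_leaf_total_def sum_trees_of_Suc eq leaves_Node)
  then show "tree_leaf_total P (Suc n) = forest_leaf_total Q n + of_bool (n = 0)"
    by (simp only: sum.distrib sum_forests_of_Nil_indicator forest_leaf_total_def)
qed

lemma tree_counts_Suc_eq_nonempty_forests:
  assumes "\<And>ts. P (Node ts) \<longleftrightarrow> ts \<noteq> [] \<and> list_all Q ts"
  shows "tree_count P (Suc n) = forest_count Q n - of_bool (n = 0)"
    and "tree_leaf_total P (Suc n) = forest_leaf_total Q n"
proof -
  have eq: "{ts. P (Node ts) \<and> forest_nodes ts = n} = forests_of Q n - {[]}"
    using assms by (auto simp: forests_of_def)
  have "n = 0 \<Longrightarrow> 0 < card (forests_of Q n)"
    by (subst card_gt_0_iff) (metis Nil_in_forests_of empty_iff finite_forests_of)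
  then show "tree_count P (Suc n) = forest_count Q n - of_bool (n = 0)"
    using sum_trees_of_Suc[where f = "\<lambda>_. 1::nat" and P = P and n = n]
    by (simp add: tree_count_def forest_count_def eq card_Diff_singleton_if of_nat_diff Suc_le_eq)
  show "tree_leaf_total P (Suc n) = forest_leaf_total Q n"
    by (simp add: tree_leaf_total_def forest_leaf_total_def sum_trees_of_Suc eq leaves_Node sum_diff1)
qed

lemmas even_leaved_counts_Suc = tree_counts_Suc_eq_forests[OF even_leaved_Node]
lemmas odd_leaved_counts_Suc = tree_counts_Suc_eq_nonempty_forests[OF odd_leaved_Node]
lemmas retakh_branch_counts_Suc = tree_counts_Suc_eq_forests[OF retakh_branch_Node]
lemmas retakh_counts_Suc = tree_counts_Suc_eq_forests[OF retakh_Node]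

lemma vfun_rationalized:
  assumes "0 < \<bar>z\<bar>" "\<bar>z\<bar> < 1/3"
  defines "D \<equiv> 1 - z + sqrt (1 - 2*z - 3*z^2)"
  shows "2 * \<bar>z\<bar> < D" "vfun z = 2 * z / D" "D^2 = (2 - 2*z) * D - 4 * z^2"
proof -
  define s where "s = sqrt (1 - 2*z - 3*z^2)"
  have Ds: "D = 1 - z + s" by (simp add: D_def s_def)
  have "0 \<le> (1 - 3*z) * (1 + z)" using assms by (intro mult_nonneg_nonneg) auto
  also have "\<dots> = 1 - 2*z - 3*z^2" by (simp add: algebra_simps power2_eq_square)
  finally have "0 \<le> 1 - 2*z - 3*z^2" .
  then have s2: "s^2 = 1 - 2*z - 3*z^2" and "0 \<le> s"
    unfolding s_def by simp_all
  then show D: "2 * \<bar>z\<bar> < D"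
    using assms(1,2) unfolding Ds by (auto simp: abs_if)
  have "(1 - z - s) * D = 4 * z^2"
    using s2 unfolding Ds by (simp add: algebra_simps power2_eq_square)
  moreover have "2 * z * vfun z = 1 - z - s"
    using assms(1) by (simp add: vfun_def motzkinM_def s_def power2_eq_square)
  ultimately have "2 * z * (vfun z * D - 2 * z) = 0"
    by algebra
  moreover have "D \<noteq> 0" using D by linarith
  ultimately show "vfun z = 2 * z / D"
    using assms(1) by (simp add: eq_divide_eq)
  show "D^2 = (2 - 2*z) * D - 4 * z^2"
    using s2 unfolding Ds by (simp add: algebra_simps power2_eq_square)
qed

lemma vfun_equation:
  assumes "0 < \<bar>z\<bar>" "\<bar>z\<bar> < 1/3"
  shows "vfun z = z * (1 + vfun z + vfun z ^ 2)"
proof -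
  define D where "D = 1 - z + sqrt (1 - 2*z - 3*z^2)"
  note D = vfun_rationalized[OF assms, folded D_def]
  have "D \<noteq> 0" using D(1) by linarith
  then show ?thesis
    unfolding D(2) using D(3) by (simp add: field_simps power2_eq_square) algebra
qed

lemma abs_vfun_less_1: "0 < \<bar>z\<bar> \<Longrightarrow> \<bar>z\<bar> < 1/3 \<Longrightarrow> \<bar>vfun z\<bar> < 1"
  using vfun_rationalized[of z] by (simp add: abs_divide abs_mult)

lemma vfun_pos: "0 < z \<Longrightarrow> z < 1/3 \<Longrightarrow> 0 < vfun z"
  using vfun_rationalized[of z] by simp

lemma vfun_bounds:
  assumes "0 < t" "t < 1/3"
  shows "0 < vfun t" "vfun t < 1" "t * vfun t < 1" "t * (1 + vfun t) < 1"
proof -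
  show v: "0 < vfun t" "vfun t < 1"
    using vfun_pos[of t] abs_vfun_less_1[of t] assms by auto
  have "t * vfun t < 1/3 * 1" "t * (1 + vfun t) < 1/3 * 2"
    using v assms by (intro mult_strict_mono; simp)+
  then show "t * vfun t < 1" "t * (1 + vfun t) < 1" by simp_all
qed

section \<open>Convergence for \<open>|z| < 1/3\<close>\<close>

text \<open>
  The bounds are the values at \<open>t\<close> of the generating functions. The induction on \<open>N\<close> works
  because the tree series up to degree \<open>N\<close> only involves the forest series up to degree
  \<open>N - 1\<close>.
\<close>

lemma partial_gf_even_odd_le:
  assumes t: "0 < t" "t < 1/3"
  defines "v \<equiv> vfun t"
  shows "partial_gf (tree_count even_leaved) t N \<le> v / (1 + v)
       \<and> partial_gf (tree_count odd_leaved) t N \<le> t * v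
       \<and> partial_gf (forest_count odd_leaved) t N \<le> 1 / (1 - t * v)
       \<and> partial_gf (forest_count even_leaved) t N \<le> 1 + v"
proof -
  have v: "0 < v" "v < 1" "t * v < 1"
    using vfun_bounds[OF t] unfolding v_def by auto
  have v_eq: "t / (1 - t * v) = v / (1 + v)"
    using vfun_equation[of t] t v unfolding v_def[symmetric]
    by (simp add: field_simps power2_eq_square)
  show ?thesis
  proof (induction N)
    case 0
    show ?case using v t by (simp add: partial_gf_def)
  next
    case (Suc N)
    have E: "partial_gf (tree_count even_leaved) t (Suc N) \<le> v / (1 + v)"
    proof -
      have "partial_gf (tree_count even_leaved) t (Suc N) = t * partial_gf (forest_count odd_leaved) t N"
        by (simp add: partial_gf_Suc_shift even_leaved_counts_Suc)
      also have "\<dots> \<le> t * (1 / (1 - t * v))"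
        using Suc t by (intro mult_left_mono) auto
      finally show ?thesis using v_eq by simp
    qed
    have O: "partial_gf (tree_count odd_leaved) t (Suc N) \<le> t * v"
    proof -
      have "partial_gf (tree_count odd_leaved) t (Suc N)
          = t * (partial_gf (forest_count even_leaved) t N - of_bool (0 < N))"
        by (simp add: partial_gf_Suc_shift odd_leaved_counts_Suc partial_gf_diff partial_gf_of_bool_0)
      also have "\<dots> \<le> t * v"
        using Suc v t by (cases N) (auto simp: partial_gf_def intro: mult_left_mono)
      finally show ?thesis .
    qed
    have "1 + t * v * (1 / (1 - t * v)) = 1 / (1 - t * v)"
      using v by (simp add: field_simps)
    then have FO: "partial_gf (forest_count odd_leaved) t (Suc N) \<le> 1 / (1 - t * v)"
      using Suc t by (intro partial_gf_fixpoint_le[OF forest_count_rec _ _ _ _ O]) auto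
    have "1 + v / (1 + v) * (1 + v) = 1 + v"
      using v by simp
    then have FE: "partial_gf (forest_count even_leaved) t (Suc N) \<le> 1 + v"
      using Suc t by (intro partial_gf_fixpoint_le[OF forest_count_rec _ _ _ _ E]) auto
    show ?case using E O FO FE by blast
  qed
qed

lemma partial_gf_branch_le:
  assumes t: "0 < t" "t < 1/3"
  defines "v \<equiv> vfun t"
  shows "partial_gf (tree_count retakh_branch) t N \<le> t * (1 + v)
       \<and> partial_gf (forest_count retakh_branch) t N \<le> 1 / (1 - t * (1 + v))"
proof -
  have v: "0 < v" "t * (1 + v) < 1"
    using vfun_bounds[OF t] unfolding v_def by auto
  have FE: "partial_gf (forest_count even_leaved) t N \<le> 1 + v" for N
    using partial_gf_even_odd_le[OF t] unfolding v_def by blast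
  have "1 + t * (1 + v) * (1 / (1 - t * (1 + v))) = 1 / (1 - t * (1 + v))"
    using v by (simp add: field_simps)
  show ?thesis
  proof (induction N)
    case 0
    show ?case using v t by (simp add: partial_gf_def)
  next
    case (Suc N)
    have C: "partial_gf (tree_count retakh_branch) t (Suc N) \<le> t * (1 + v)"
      using FE[of N] t
      by (simp add: partial_gf_Suc_shift retakh_branch_counts_Suc mult_left_mono)
    then have "partial_gf (forest_count retakh_branch) t (Suc N) \<le> 1 / (1 - t * (1 + v))"
      using Suc t \<open>1 + _ = _\<close>
      by (intro partial_gf_fixpoint_le[OF forest_count_rec _ _ _ _ C]) auto
    with C show ?case by blast
  qed
qed

lemma summable_counts:
  assumes t: "0 < t" "t < 1/3" and Q: "Q \<in> {even_leaved, odd_leaved, retakh_branch}"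
  shows "summable (\<lambda>n. tree_count Q n * t ^ n)" "summable (\<lambda>n. forest_count Q n * t ^ n)"
proof -
  obtain A B where "\<And>N. partial_gf (tree_count Q) t N \<le> A" "\<And>N. partial_gf (forest_count Q) t N \<le> B"
  proof -
    note even_odd = partial_gf_even_odd_le[OF t] and branch = partial_gf_branch_le[OF t]
    from Q consider "Q = even_leaved" | "Q = odd_leaved" | "Q = retakh_branch" by blast
    then show ?thesis
    proof cases
      case 1
      show ?thesis by (rule that) (use 1 even_odd in blast)+
    next
      case 2
      show ?thesis by (rule that) (use 2 even_odd in blast)+
    next
      case 3
      show ?thesis by (rule that) (use 3 branch in blast)+
    qed
  qed
  then show "summable (\<lambda>n. tree_count Q n * t ^ n)" "summable (\<lambda>n. forest_count Q n * t ^ n)"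
    using t by (metis count_nonneg less_imp_le summable_partial_gf_bounded)+
qed

lemma summable_leaf_totals:
  assumes t: "0 < t" "t < 1/3" and Q: "Q \<in> {even_leaved, odd_leaved, retakh_branch}"
  shows "summable (\<lambda>n. tree_leaf_total Q n * t ^ n)" "summable (\<lambda>n. forest_leaf_total Q n * t ^ n)"
proof -
  define s :: real where "s = (t + 1/3) / 2"
  have s: "0 < s" "s < 1/3" "t < s" using t by (auto simp: s_def)
  show "summable (\<lambda>n. tree_leaf_total Q n * t ^ n)"
    by (rule summable_gf_times_n[OF _ _ tree_leaf_total_le summable_counts(1)[OF s(1,2) Q]])
      (use s t in auto)
  show "summable (\<lambda>n. forest_leaf_total Q n * t ^ n)"
    by (rule summable_gf_times_n[OF _ _ forest_leaf_total_le summable_counts(2)[OF s(1,2) Q]])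
      (use s t in auto)
qed

lemma gf_even_leaved_less:
  assumes t: "0 < t" "t < 1/3"
  shows "gf (tree_count even_leaved) t < 1/2"
proof -
  have "gf (tree_count even_leaved) t \<le> vfun t / (1 + vfun t)"
    using partial_gf_even_odd_le[OF t] t by (intro gf_le_partial_gf_bound) auto
  also have "\<dots> < 1/2"
    using vfun_bounds[OF t] by (simp add: field_simps)
  finally show ?thesis .
qed

section \<open>Generating function equations\<close>

lemma gf_forest_count:
  assumes "summable (\<lambda>n. tree_count Q n * \<bar>z\<bar> ^ n)" "summable (\<lambda>n. forest_count Q n * \<bar>z\<bar> ^ n)"
  shows "gf (forest_count Q) z = 1 + gf (tree_count Q) z * gf (forest_count Q) z"
proof -
  have "(\<lambda>n. forest_count Q n * z ^ n)
      = (\<lambda>n. of_bool (n = 0) * z ^ n + seq_conv (tree_count Q) (forest_count Q) n * z ^ n)"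
    by (rule ext, subst forest_count_rec) (simp add: distrib_right)
  also have "\<dots> sums (1 + gf (tree_count Q) z * gf (forest_count Q) z)"
    by (intro sums_add sums_of_bool_0 sums_seq_conv assms) simp_all
  finally show ?thesis
    unfolding gf_def by (rule sums_unique[symmetric])
qed

lemma gf_forest_leaf_total:
  assumes "summable (\<lambda>n. tree_count Q n * \<bar>z\<bar> ^ n)" "summable (\<lambda>n. forest_count Q n * \<bar>z\<bar> ^ n)"
    and "summable (\<lambda>n. tree_leaf_total Q n * \<bar>z\<bar> ^ n)"
    and "summable (\<lambda>n. forest_leaf_total Q n * \<bar>z\<bar> ^ n)"
  shows "gf (forest_leaf_total Q) z = gf (tree_leaf_total Q) z * gf (forest_count Q) z ^ 2"
proof -
  have "(\<lambda>n. forest_leaf_total Q n * z ^ n)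
      = (\<lambda>n. seq_conv (tree_leaf_total Q) (forest_count Q) n * z ^ n
             + seq_conv (tree_count Q) (forest_leaf_total Q) n * z ^ n)"
    by (rule ext, subst forest_leaf_total_rec) (simp add: distrib_right)
  also have "\<dots> sums (gf (tree_leaf_total Q) z * gf (forest_count Q) z
                      + gf (tree_count Q) z * gf (forest_leaf_total Q) z)"
    by (intro sums_add sums_seq_conv assms) simp_all
  finally have "gf (forest_leaf_total Q) z = gf (tree_leaf_total Q) z * gf (forest_count Q) z
                  + gf (tree_count Q) z * gf (forest_leaf_total Q) z"
    unfolding gf_def by (rule sums_unique[symmetric])
  with gf_forest_count[OF assms(1,2)] show ?thesis
    by algebra
qed

context
  fixes z :: real
  assumes z: "0 < \<bar>z\<bar>" "\<bar>z\<bar> < 1/3"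
begin

lemma gf_count_equations:
  fixes Q :: "ptree \<Rightarrow> bool"
  assumes "Q \<in> {even_leaved, odd_leaved, retakh_branch}"
  shows "gf (forest_count Q) z = 1 + gf (tree_count Q) z * gf (forest_count Q) z"
    and "gf (forest_leaf_total Q) z = gf (tree_leaf_total Q) z * gf (forest_count Q) z ^ 2"
proof -
  note summable = summable_counts[OF z assms] summable_leaf_totals[OF z assms]
  show "gf (forest_count Q) z = 1 + gf (tree_count Q) z * gf (forest_count Q) z"
    by (rule gf_forest_count[OF summable(1,2)])
  show "gf (forest_leaf_total Q) z = gf (tree_leaf_total Q) z * gf (forest_count Q) z ^ 2"
    by (rule gf_forest_leaf_total[OF summable])
qed

lemma gf_shift_eq:
  assumes "a 0 = 0" "\<And>n. a (Suc n) = b n" "\<And>n. 0 \<le> b n" "summable (\<lambda>n. b n * \<bar>z\<bar> ^ n)"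
  shows "gf a z = z * gf b z"
  by (rule gf_Suc_shift[where a = a, OF assms(1)]) (simp add: assms(2) gf_sums[OF assms(3,4)])

lemma gf_forest_counts:
  defines "v \<equiv> vfun z"
  shows "gf (forest_count even_leaved) z = 1 + v"
    and "gf (forest_count odd_leaved) z * (1 - z * v) = 1"
    and "gf (forest_count retakh_branch) z = 1 + v + v^2"
proof -
  define E Od FO FE C FC where
    "E = gf (tree_count even_leaved) z" and "Od = gf (tree_count odd_leaved) z"
    and "FO = gf (forest_count odd_leaved) z" and "FE = gf (forest_count even_leaved) z"
    and "C = gf (tree_count retakh_branch) z" and "FC = gf (forest_count retakh_branch) z"
  note count_summable = summable_counts[OF z]
  have FO: "FO = 1 + Od * FO" and FE: "FE = 1 + E * FE" and FC: "FC = 1 + C * FC"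
    unfolding E_def Od_def FO_def FE_def C_def FC_def by (rule gf_count_equations(1); simp)+
  have E: "E = z * FO"
    unfolding E_def FO_def
    by (rule gf_shift_eq) (simp_all add: even_leaved_counts_Suc count_summable)
  have C: "C = z * FE"
    unfolding C_def FE_def
    by (rule gf_shift_eq) (simp_all add: retakh_branch_counts_Suc count_summable)
  have "(\<lambda>n. tree_count odd_leaved (Suc n) * z ^ n) sums (FE - 1)"
    unfolding odd_leaved_counts_Suc left_diff_distrib FE_def
    by (intro sums_diff gf_sums sums_of_bool_0) (simp_all add: count_summable)
  then have Od: "Od = z * (FE - 1)"
    unfolding Od_def by (intro gf_Suc_shift) simp_all
  have "\<bar>E\<bar> \<le> gf (tree_count even_leaved) \<bar>z\<bar>"
    unfolding E_def by (rule abs_gf_le) (simp_all add: count_summable)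
  also have "\<dots> < 1/2" by (rule gf_even_leaved_less[OF z])
  finally have "\<bar>E\<bar> < 1/2" .
  have v: "v = z * (1 + v + v^2)" "\<bar>v\<bar> < 1"
    using vfun_equation[OF z] abs_vfun_less_1[OF z] unfolding v_def by simp_all
  \<comment> \<open>The roots are \<open>v / (1 + v)\<close> and \<open>1 / (1 + v)\<close>; the bound on \<open>|E|\<close> selects the first.\<close>
  have "(1 + z) * E^2 - (1 + z) * E + z = 0"
    using E Od FO FE by algebra
  then have "((1 + v) * E - v) * ((1 + v) * E - 1) = 0"
    using v(1) by algebra
  moreover have "\<bar>(1 + v) * E\<bar> < 2 * (1/2)"
    unfolding abs_mult using v(2) \<open>\<bar>E\<bar> < 1/2\<close> by (intro mult_strict_mono') auto
  ultimately have Ev: "(1 + v) * E = v" by auto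
  show FEv: "FE = 1 + v" using FE Ev by algebra
  show "FO * (1 - z * v) = 1" using FO Od FEv by algebra
  show "FC = 1 + v + v^2" using FC C FEv v(1) by algebra
qed

lemma gf_forest_leaf_total_even_leaved:
  defines "v \<equiv> vfun z"
  shows "gf (forest_leaf_total even_leaved) z = z * (1 + v) / (1 - v)"
proof -
  define LE LO LFO LFE FO FE where
    "LE = gf (tree_leaf_total even_leaved) z" and "LO = gf (tree_leaf_total odd_leaved) z"
    and "LFO = gf (forest_leaf_total odd_leaved) z" and "LFE = gf (forest_leaf_total even_leaved) z"
    and "FO = gf (forest_count odd_leaved) z" and "FE = gf (forest_count even_leaved) z"
  note leaf_summable = summable_leaf_totals[OF z]
  have "(\<lambda>n. tree_leaf_total even_leaved (Suc n) * z ^ n) sums (LFO + 1)"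
    unfolding even_leaved_counts_Suc distrib_right LFO_def
    by (intro sums_add gf_sums sums_of_bool_0) (simp_all add: leaf_summable)
  then have LE: "LE = z * (LFO + 1)"
    unfolding LE_def by (intro gf_Suc_shift) simp_all
  have LO: "LO = z * LFE"
    unfolding LO_def LFE_def
    by (rule gf_shift_eq) (simp_all add: odd_leaved_counts_Suc leaf_summable)
  have LFO: "LFO = LO * FO^2" and LFE: "LFE = LE * FE^2"
    unfolding LFO_def LO_def FO_def LFE_def LE_def FE_def by (rule gf_count_equations(2); simp)+
  have FE: "FE = 1 + v" and FO: "FO * (1 - z * v) = 1"
    unfolding FE_def FO_def v_def by (rule gf_forest_counts)+
  have v: "v = z * (1 + v + v^2)" "\<bar>v\<bar> < 1"
    using vfun_equation[OF z] abs_vfun_less_1[OF z] unfolding v_def by simp_all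
  have "z * FE * FO = v" using FE FO v(1) by algebra
  moreover have "LE = LE * (z * FE * FO)^2 + z"
    using LE LO LFO LFE by (simp add: algebra_simps power2_eq_square)
  ultimately have "LE * (1 - v^2) = z" by (simp add: algebra_simps)
  moreover have "LFE * (1 - v) = LE * (1 - v^2) * (1 + v)"
    unfolding LFE FE by (simp add: algebra_simps power2_eq_square)
  ultimately have "LFE * (1 - v) = z * (1 + v)" by simp
  moreover have "1 - v \<noteq> 0" using v(2) by auto
  ultimately show ?thesis unfolding LFE_def by (simp add: eq_divide_eq)
qed

lemma sums_tree_leaf_total_retakh:
  defines "v \<equiv> vfun z"
  shows "(\<lambda>n. tree_leaf_total retakh n * z ^ n)
           sums (z * (z * (gf (forest_leaf_total even_leaved) z + 1) * (1 + v + v^2)^2 + 1))"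
proof -
  define LC LFC LFE FC where
    "LC = gf (tree_leaf_total retakh_branch) z" and "LFC = gf (forest_leaf_total retakh_branch) z"
    and "LFE = gf (forest_leaf_total even_leaved) z" and "FC = gf (forest_count retakh_branch) z"
  note leaf_summable = summable_leaf_totals[OF z]
  have "(\<lambda>n. tree_leaf_total retakh_branch (Suc n) * z ^ n) sums (LFE + 1)"
    unfolding retakh_branch_counts_Suc distrib_right LFE_def
    by (intro sums_add gf_sums sums_of_bool_0) (simp_all add: leaf_summable)
  then have LC: "LC = z * (LFE + 1)"
    unfolding LC_def by (intro gf_Suc_shift) simp_all
  have LFC: "LFC = LC * FC^2"
    unfolding LFC_def LC_def FC_def by (rule gf_count_equations(2)) simp
  have FC: "FC = 1 + v + v^2"
    unfolding FC_def v_def by (rule gf_forest_counts)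
  have "(\<lambda>n. tree_leaf_total retakh (Suc n) * z ^ n) sums (LFC + 1)"
    unfolding retakh_counts_Suc distrib_right LFC_def
    by (intro sums_add gf_sums sums_of_bool_0) (simp_all add: leaf_summable)
  then have "(\<lambda>n. tree_leaf_total retakh n * z ^ n) sums (z * (LFC + 1))"
    by (intro sums_Suc_shift) simp_all
  then show ?thesis unfolding LFC LC FC LFE_def by simp
qed

end

lemma retakh_leaf_gf_closed_form:
  fixes z v :: real
  assumes v: "v = z * (1 + v + v^2)" and "v \<noteq> 1"
  shows "z * (z * (z * (1 + v) / (1 - v) + 1) * (1 + v + v^2)^2 + 1)
           = v * (1 + v) * (1 - v + 2 * v^2 - v^3) / ((1 - v) * (1 + v + v^2))"
proof -
  define q where "q = 1 + v + v^2"
  have "0 < (v + 1/2)^2 + 3/4" by (intro add_nonneg_pos) simp_all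
  then have "q \<noteq> 0" by (simp add: q_def power2_eq_square algebra_simps)
  have "1 - v \<noteq> 0" using \<open>v \<noteq> 1\<close> by simp
  have zq: "z * q = v" using v by (simp add: q_def)
  have "z * (z * (z * (1 + v) / (1 - v) + 1) * q^2 + 1) = (z * q)^2 * (z * (1 + v) / (1 - v) + 1) + z"
    by (simp add: algebra_simps power2_eq_square)
  also have "\<dots> = v^2 * (z * (1 + v) / (1 - v) + 1) + z"
    unfolding zq ..
  also have "\<dots> = (v^2 * (z * q * (1 + v) + (1 - v) * q) + z * q * (1 - v)) / ((1 - v) * q)"
    using \<open>q \<noteq> 0\<close> \<open>1 - v \<noteq> 0\<close> by (simp add: field_simps)
  also have "\<dots> = (v^2 * (v * (1 + v) + (1 - v) * q) + v * (1 - v)) / ((1 - v) * q)"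
    unfolding zq ..
  also have "\<dots> = v * (1 + v) * (1 - v + 2 * v^2 - v^3) / ((1 - v) * q)"
    by (simp add: q_def algebra_simps power2_eq_square power3_eq_cube)
  finally show ?thesis unfolding q_def .
qed

theorem mainTheorem6:
  fixes z :: real
  assumes "0 < \<bar>z\<bar>" and "\<bar>z\<bar> < 1/3"
  shows "(\<lambda>n. real (retakh_leaf_total n) * z ^ n) sums
           (let v = vfun z in
              v * (1 + v) * (1 - v + 2 * v^2 - v^3) / ((1 - v) * (1 + v + v^2)))"
proof -
  have "real (retakh_leaf_total n) = tree_leaf_total retakh n" for n
    by (simp add: retakh_leaf_total_def tree_leaf_total_def trees_of_def)
  moreover have "vfun z \<noteq> 1" using abs_vfun_less_1[OF assms] by auto
  ultimately show ?thesis
    using sums_tree_leaf_total_retakh[OF assms] vfun_equation[OF assms]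
    unfolding gf_forest_leaf_total_even_leaved[OF assms] Let_def
    by (simp add: retakh_leaf_gf_closed_form)
qed

end
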